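(* Let $P$ be a grid polygon and let $\pi$ be a shortest path in $P$ between two cells of $P$. Then its length satisfies $|\pi|\le \frac12 E(P)-2$.
   Context: The plane is tiled by unit square cells indexed by $(x,y)\in\mathbb{Z}^2$; two cells are adjacent if they share an edge. A grid polygon $P$ is a finite nonempty set of cells connected under adjacency (it may contain holes, i.e. bounded regions of cells not in $P$). $E(P)$ is the number of unit edges shared by a cell of $P$ and a cell not in $P$. A path in $P$ is a sequence of cells of $P$ in which consecutive cells are adjacent; its length is the number of steps, i.e. the number of cells minus one. *)

theory Defs
  imports Main
begin

type_synonym cell = "int \<times> int"

definition adj :: "cell \<Rightarrow> cell \<Rightarrow> bool" where
  "adj c d \<longleftrightarrow> \<bar>fst c - fst d\<bar> + \<bar>snd c - snd d\<bar> = 1"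

definition is_path :: "cell set \<Rightarrow> cell list \<Rightarrow> bool" where
  "is_path P ps \<longleftrightarrow> ps \<noteq> [] \<and> set ps \<subseteq> P \<and>
     (\<forall>i. Suc i < length ps \<longrightarrow> adj (ps ! i) (ps ! Suc i))"

definition path_len :: "cell list \<Rightarrow> nat" where
  "path_len ps = length ps - 1"

definition connected_cells :: "cell set \<Rightarrow> bool" where
  "connected_cells P \<longleftrightarrow> (\<forall>a\<in>P. \<forall>b\<in>P. \<exists>ps. is_path P ps \<and> hd ps = a \<and> last ps = b)"

definition grid_polygon :: "cell set \<Rightarrow> bool" where
  "grid_polygon P \<longleftrightarrow> finite P \<and> P \<noteq> {} \<and> connected_cells P"

text \<open>E(P): number of unit edges between a cell of P and a cell outside P
  (each such edge corresponds to exactly one ordered pair (inside, outside)).\<close>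
definition boundary_edges :: "cell set \<Rightarrow> nat" where
  "boundary_edges P = card {(c, d). c \<in> P \<and> d \<notin> P \<and> adj c d}"

definition shortest_path :: "cell set \<Rightarrow> cell list \<Rightarrow> bool" where
  "shortest_path P ps \<longleftrightarrow> is_path P ps \<and>
     (\<forall>qs. is_path P qs \<and> hd qs = hd ps \<and> last qs = last ps \<longrightarrow> path_len ps \<le> path_len qs)"

end

theory Submission
  imports Defs
begin

text \<open>Fix a direction v and walk from every cell of the shortest path \<pi> in direction v until
  just before leaving P; the last cell reached, the exit, has a boundary edge on its v-side, and
  distinct pairs of a direction and an exit give distinct boundary edges. If two cells of \<pi> have
  the same exit in direction v, they lie on a common straight segment inside P, so by minimality
  \<pi> moves only parallel to v between them. Hence the start of \<pi> together with the cells entered by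
  steps perpendicular to v have pairwise distinct exits. Summing over the four directions, every
  step of \<pi> is counted twice and the starting cell four times: E(P) \<ge> 2 |\<pi>| + 4.\<close>

lemma is_path_Nil [simp]: "\<not> is_path P []"
  by (simp add: is_path_def)

lemma is_path_singleton [simp]: "is_path P [x] \<longleftrightarrow> x \<in> P"
  by (simp add: is_path_def)

lemma is_path_subset: "is_path P xs \<Longrightarrow> set xs \<subseteq> P"
  by (simp add: is_path_def)

lemma is_path_Cons_Cons [simp]:
  "is_path P (x # y # zs) \<longleftrightarrow> x \<in> P \<and> adj x y \<and> is_path P (y # zs)"
  unfolding is_path_def by (auto simp: nth_Cons less_Suc_eq_0_disj split: nat.splits)

lemma is_path_append_tl:
  "is_path P xs \<Longrightarrow> is_path P ys \<Longrightarrow> last xs = hd ys \<Longrightarrow> is_path P (xs @ tl ys)"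
proof (induction xs rule: induct_list012)
  case (2 x)
  then show ?case by (cases ys) auto
qed auto

lemma last_append_tl:
  "xs \<noteq> [] \<Longrightarrow> ys \<noteq> [] \<Longrightarrow> last xs = hd ys \<Longrightarrow> last (xs @ tl ys) = last ys"
  by (cases ys) auto

lemma is_path_take: "is_path P xs \<Longrightarrow> n < length xs \<Longrightarrow> is_path P (take (Suc n) xs)"
  unfolding is_path_def by (auto dest: in_set_takeD)

lemma is_path_drop: "is_path P xs \<Longrightarrow> n < length xs \<Longrightarrow> is_path P (drop n xs)"
  unfolding is_path_def by (auto dest: in_set_dropD)

lemma adj_sym: "adj a b \<Longrightarrow> adj b a"
  unfolding adj_def by (simp add: abs_minus_commute)

lemma adj_neq: "adj c d \<Longrightarrow> c \<noteq> d"
  unfolding adj_def by auto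

lemma is_path_rev: "is_path P xs \<Longrightarrow> is_path P (rev xs)"
proof (induction xs rule: induct_list012)
  case (3 x y zs)
  then have "is_path P (rev (y # zs) @ tl [y, x])"
    by (intro is_path_append_tl) (use is_path_subset[of P "y # zs"] in \<open>auto intro: adj_sym\<close>)
  then show ?case by simp
qed auto

text \<open>Otherwise splicing qs into \<pi> would give a shorter path.\<close>
lemma shortest_path_segment_le:
  assumes sp: "shortest_path P \<pi>" and ij: "i \<le> j" "j < length \<pi>"
    and qs: "is_path P qs" "hd qs = \<pi> ! i" "last qs = \<pi> ! j"
  shows "j - i \<le> path_len qs"
proof -
  define A where "A = take (Suc i) \<pi>"
  define B where "B = drop j \<pi>"
  have p: "is_path P \<pi>" using sp by (simp add: shortest_path_def)
  have "last A = \<pi> ! i"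
    using ij by (simp add: A_def take_Suc_conv_app_nth)
  then have A: "is_path P A" "hd A = hd \<pi>" "last A = \<pi> ! i" "length A = Suc i"
    using is_path_take[OF p, of i] ij by (simp_all add: A_def)
  have B: "is_path P B" "hd B = \<pi> ! j" "last B = last \<pi>" "length B = length \<pi> - j"
    using is_path_drop[OF p] ij by (auto simp: B_def hd_drop_conv_nth)
  have ne: "qs \<noteq> []" "A \<noteq> []" "B \<noteq> []"
    using qs(1) A(1) B(1) by auto
  then have Aq: "is_path P (A @ tl qs)" "last (A @ tl qs) = \<pi> ! j"
    using A B qs is_path_append_tl last_append_tl[of A qs] by auto
  have "is_path P (A @ tl qs @ tl B)" "hd (A @ tl qs @ tl B) = hd \<pi>"
    "last (A @ tl qs @ tl B) = last \<pi>"
    using ne Aq A B is_path_append_tl[OF Aq(1) B(1)] last_append_tl[of "A @ tl qs" B]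
    by auto
  then have "path_len \<pi> \<le> path_len (A @ tl qs @ tl B)"
    using sp by (simp add: shortest_path_def)
  then show ?thesis using A(4) B(4) ij qs(1) by (auto simp: path_len_def)
qed

definition unit_dirs :: "(int \<times> int) set" where
  "unit_dirs = {(1, 0), (-1, 0), (0, 1), (0, -1)}"

definition ray :: "cell \<Rightarrow> int \<times> int \<Rightarrow> nat \<Rightarrow> cell" where
  "ray c v t = (fst c + int t * fst v, snd c + int t * snd v)"

definition along :: "int \<times> int \<Rightarrow> cell \<Rightarrow> int" where
  "along v c = fst v * fst c + snd v * snd c"

definition across :: "int \<times> int \<Rightarrow> cell \<Rightarrow> int" where
  "across v c = snd v * fst c - fst v * snd c"

definition ray_reach :: "cell set \<Rightarrow> int \<times> int \<Rightarrow> cell \<Rightarrow> nat" where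
  "ray_reach P v c = (GREATEST k. \<forall>j\<le>k. ray c v j \<in> P)"

definition ray_exit :: "cell set \<Rightarrow> int \<times> int \<Rightarrow> cell \<Rightarrow> cell" where
  "ray_exit P v c = ray c v (ray_reach P v c)"

lemma ray_0 [simp]: "ray c v 0 = c"
  by (simp add: ray_def)

lemma ray_ray: "ray (ray c v s) v t = ray c v (s + t)"
  by (simp add: ray_def algebra_simps)

lemma inj_ray: "v \<in> unit_dirs \<Longrightarrow> inj (ray c v)"
  unfolding inj_def unit_dirs_def ray_def by auto

lemma adj_ray_Suc: "v \<in> unit_dirs \<Longrightarrow> adj (ray c v t) (ray c v (Suc t))"
  unfolding unit_dirs_def ray_def adj_def by auto

lemma along_ray: "v \<in> unit_dirs \<Longrightarrow> along v (ray c v t) = along v c + int t"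
  unfolding unit_dirs_def ray_def along_def by auto

lemma adj_along_across:
  "v \<in> unit_dirs \<Longrightarrow> adj a b \<Longrightarrow> \<bar>along v b - along v a\<bar> + \<bar>across v b - across v a\<bar> = 1"
  unfolding unit_dirs_def along_def across_def adj_def by (auto simp: abs_minus_commute)

lemma adj_imp_ray_1: "adj c d \<Longrightarrow> \<exists>v\<in>unit_dirs. d = ray c v 1"
  unfolding adj_def unit_dirs_def ray_def
  by (cases c; cases d) (auto simp: abs_if split: if_splits)

lemma ray_segment_le_card:
  assumes "finite P" "v \<in> unit_dirs" "\<forall>j\<le>k. ray c v j \<in> P"
  shows "k \<le> card P"
proof -
  have "Suc k = card (ray c v ` {0..k})"
    using inj_ray[OF assms(2)] by (simp add: card_image inj_on_subset[of _ UNIV])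
  also have "\<dots> \<le> card P"
    using assms by (intro card_mono) auto
  finally show ?thesis by simp
qed

lemma ray_reach_in:
  assumes "finite P" "v \<in> unit_dirs" "c \<in> P"
  shows "\<forall>j\<le>ray_reach P v c. ray c v j \<in> P"
  unfolding ray_reach_def
  by (rule GreatestI_nat[where k=0 and b="card P"]) (use assms ray_segment_le_card in auto)

lemma ray_reach_Suc_notin:
  assumes "finite P" "v \<in> unit_dirs" "c \<in> P"
  shows "ray c v (Suc (ray_reach P v c)) \<notin> P"
proof
  assume "ray c v (Suc (ray_reach P v c)) \<in> P"
  then have "\<forall>j\<le>Suc (ray_reach P v c). ray c v j \<in> P"
    using ray_reach_in[OF assms] by (auto simp: le_Suc_eq)
  then have "Suc (ray_reach P v c) \<le> ray_reach P v c"
    unfolding ray_reach_def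
    by (rule Greatest_le_nat[where b="card P"]) (use assms ray_segment_le_card in auto)
  then show False by simp
qed

lemma ray_exit_boundary_edge:
  assumes "finite P" "v \<in> unit_dirs" "c \<in> P"
  shows "ray_exit P v c \<in> P \<and> ray (ray_exit P v c) v 1 \<notin> P
    \<and> adj (ray_exit P v c) (ray (ray_exit P v c) v 1)"
  using ray_reach_in[OF assms] ray_reach_Suc_notin[OF assms] adj_ray_Suc[OF assms(2)]
  by (auto simp: ray_exit_def ray_ray)

lemma is_path_ray:
  assumes "v \<in> unit_dirs" "\<forall>t\<le>n. ray c v t \<in> P"
  shows "is_path P (map (ray c v) [0..<Suc n])"
  using assms adj_ray_Suc unfolding is_path_def by (auto simp del: upt_Suc)

lemma path_between_same_exit:
  assumes "finite P" "v \<in> unit_dirs" "c \<in> P" "d \<in> P" "ray_exit P v c = ray_exit P v d"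
  shows "\<exists>qs. is_path P qs \<and> hd qs = c \<and> last qs = d
    \<and> int (path_len qs) = \<bar>along v d - along v c\<bar>"
proof -
  have *: "\<exists>qs. is_path P qs \<and> hd qs = c \<and> last qs = d
      \<and> int (path_len qs) = \<bar>along v d - along v c\<bar>"
    if "c \<in> P" "d \<in> P" "ray_exit P v c = ray_exit P v d" "ray_reach P v d \<le> ray_reach P v c"
    for c d
  proof -
    define n where "n = ray_reach P v c - ray_reach P v d"
    have "ray c v (ray_reach P v c) = ray d v (ray_reach P v d)"
      using that by (simp add: ray_exit_def)
    then have d: "d = ray c v n"
      using that by (auto simp: n_def ray_def algebra_simps prod_eq_iff)
    have "\<forall>t\<le>n. ray c v t \<in> P"
      using ray_reach_in[OF assms(1,2) that(1)] by (auto simp: n_def)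
    then show ?thesis
      using is_path_ray[OF assms(2)] d along_ray[OF assms(2)]
      by (intro exI[of _ "map (ray c v) [0..<Suc n]"])
        (auto simp: hd_map last_map path_len_def simp del: upt_Suc)
  qed
  show ?thesis
  proof (cases "ray_reach P v d \<le> ray_reach P v c")
    case True
    then show ?thesis using * assms by blast
  next
    case False
    then obtain qs where "is_path P qs" "hd qs = d" "last qs = c"
      "int (path_len qs) = \<bar>along v d - along v c\<bar>"
      using *[of d c] assms by (auto simp: abs_minus_commute)
    then show ?thesis
      by (intro exI[of _ "rev qs"]) (auto simp: is_path_rev hd_rev last_rev path_len_def)
  qed
qed

definition across_steps :: "int \<times> int \<Rightarrow> cell list \<Rightarrow> nat set" where
  "across_steps v \<pi> = {k. Suc k < length \<pi> \<and> across v (\<pi> ! Suc k) \<noteq> across v (\<pi> ! k)}"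

lemma finite_across_steps: "finite (across_steps v \<pi>)"
  by (rule finite_subset[of _ "{..<length \<pi>}"]) (auto simp: across_steps_def)

text \<open>The straight segment in P joining the two cells has length |along v (\<pi> ! j) - along v (\<pi> ! i)|;
  by minimality the j - i steps of \<pi> are no more, which forces all of them to move along v.\<close>
lemma shortest_path_same_exit_no_across_step:
  assumes fin: "finite P" and v: "v \<in> unit_dirs" and sp: "shortest_path P \<pi>"
    and ij: "i \<le> j" "j < length \<pi>" and exit: "ray_exit P v (\<pi> ! i) = ray_exit P v (\<pi> ! j)"
    and k: "i \<le> k" "k < j"
  shows "k \<notin> across_steps v \<pi>"
proof -
  have p: "is_path P \<pi>" using sp by (simp add: shortest_path_def)
  have in_P: "\<pi> ! i \<in> P" "\<pi> ! j \<in> P" using is_path_subset[OF p] ij by auto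
  obtain qs where qs: "is_path P qs" "hd qs = \<pi> ! i" "last qs = \<pi> ! j"
    "int (path_len qs) = \<bar>along v (\<pi> ! j) - along v (\<pi> ! i)\<bar>"
    using path_between_same_exit[OF fin v in_P exit] by blast
  let ?da = "\<lambda>m. along v (\<pi> ! Suc m) - along v (\<pi> ! m)"
  let ?dc = "\<lambda>m. \<bar>across v (\<pi> ! Suc m) - across v (\<pi> ! m)\<bar>"
  have "int (j - i) = (\<Sum>m\<in>{i..<j}. \<bar>?da m\<bar> + ?dc m)"
    using p ij adj_along_across[OF v] by (simp add: is_path_def)
  also have "\<dots> = (\<Sum>m\<in>{i..<j}. \<bar>?da m\<bar>) + (\<Sum>m\<in>{i..<j}. ?dc m)"
    by (rule sum.distrib)
  finally have "(\<Sum>m\<in>{i..<j}. ?dc m) \<le> 0"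
    using shortest_path_segment_le[OF sp ij qs(1-3)] qs(4) sum_abs[of ?da "{i..<j}"]
      sum_Suc_diff'[OF ij(1), of "\<lambda>m. along v (\<pi> ! m)"]
    by linarith
  moreover have "?dc k \<le> (\<Sum>m\<in>{i..<j}. ?dc m)"
    using k by (intro member_le_sum) auto
  ultimately have "?dc k = 0" by simp
  then show ?thesis by (simp add: across_steps_def)
qed

lemma card_across_steps_less_card_exits:
  assumes fin: "finite P" and v: "v \<in> unit_dirs" and sp: "shortest_path P \<pi>"
  shows "card (across_steps v \<pi>) < card (ray_exit P v ` set \<pi>)"
proof -
  define D where "D = insert 0 (Suc ` across_steps v \<pi>)"
  have p: "is_path P \<pi>" using sp by (simp add: shortest_path_def)
  then have D_lt: "m < length \<pi>" if "m \<in> D" for m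
    using that by (cases \<pi>) (auto simp: D_def across_steps_def)
  have distinct_exits: "ray_exit P v (\<pi> ! m) \<noteq> ray_exit P v (\<pi> ! m')"
    if mm': "m \<in> D" "m' \<in> D" "m < m'" for m m'
  proof
    assume "ray_exit P v (\<pi> ! m) = ray_exit P v (\<pi> ! m')"
    moreover obtain k where "k \<in> across_steps v \<pi>" "m' = Suc k"
      using mm' by (auto simp: D_def)
    ultimately show False
      using shortest_path_same_exit_no_across_step[OF fin v sp _ D_lt[OF mm'(2)], of m k] mm'
      by auto
  qed
  have "inj_on (\<lambda>m. ray_exit P v (\<pi> ! m)) D"
    by (intro inj_onI) (metis distinct_exits linorder_neqE_nat)
  then have "card D \<le> card (ray_exit P v ` set \<pi>)"
    using D_lt by (intro card_inj_on_le) auto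
  moreover have "card D = Suc (card (across_steps v \<pi>))"
    using finite_across_steps by (simp add: D_def card_image)
  ultimately show ?thesis by simp
qed

text \<open>Each exit cell in direction v owns the boundary edge on its v-side.\<close>
lemma sum_card_exits_le_boundary_edges:
  assumes fin: "finite P" and S: "S \<subseteq> P"
  shows "(\<Sum>v\<in>unit_dirs. card (ray_exit P v ` S)) \<le> boundary_edges P"
proof -
  define Bd where "Bd = {(c, d). c \<in> P \<and> d \<notin> P \<and> adj c d}"
  define edge where "edge = (\<lambda>(v, e). (e, ray e v 1))"
  have fin_dirs: "finite unit_dirs" by (simp add: unit_dirs_def)
  have "Bd \<subseteq> (\<lambda>(c, v). (c, ray c v 1)) ` (P \<times> unit_dirs)"
    unfolding Bd_def by (auto dest!: adj_imp_ray_1)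
  then have "finite Bd"
    by (rule finite_subset) (use fin fin_dirs in auto)
  moreover have "inj_on edge (Sigma unit_dirs (\<lambda>v. ray_exit P v ` S))"
    by (intro inj_onI) (auto simp: edge_def ray_def prod_eq_iff)
  moreover have "edge ` Sigma unit_dirs (\<lambda>v. ray_exit P v ` S) \<subseteq> Bd"
    using ray_exit_boundary_edge[OF fin] S by (auto simp: edge_def Bd_def)
  ultimately have "card (Sigma unit_dirs (\<lambda>v. ray_exit P v ` S)) \<le> card Bd"
    by (intro card_inj_on_le)
  then show ?thesis
    using fin_dirs finite_subset[OF S fin] by (simp add: boundary_edges_def Bd_def)
qed

lemma path_len_le_card_across_steps:
  assumes "is_path P \<pi>"
  shows "path_len \<pi> \<le> card (across_steps (1, 0) \<pi>) + card (across_steps (0, 1) \<pi>)"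
proof -
  have "{..<path_len \<pi>} \<subseteq> across_steps (1, 0) \<pi> \<union> across_steps (0, 1) \<pi>"
  proof
    fix k assume "k \<in> {..<path_len \<pi>}"
    then have "Suc k < length \<pi>" "\<pi> ! k \<noteq> \<pi> ! Suc k"
      using assms adj_neq by (auto simp: is_path_def path_len_def)
    then show "k \<in> across_steps (1, 0) \<pi> \<union> across_steps (0, 1) \<pi>"
      by (auto simp: across_steps_def across_def prod_eq_iff)
  qed
  then have "path_len \<pi> \<le> card (across_steps (1, 0) \<pi> \<union> across_steps (0, 1) \<pi>)"
    by (metis card_lessThan card_mono finite_Un finite_across_steps)
  also have "\<dots> \<le> card (across_steps (1, 0) \<pi>) + card (across_steps (0, 1) \<pi>)"
    by (rule card_Un_le)
  finally show ?thesis .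
qed

theorem lemma4:
  fixes P :: "cell set" and \<pi> :: "cell list"
  assumes "grid_polygon P"
    and "shortest_path P \<pi>"
  shows "2 * int (path_len \<pi>) \<le> int (boundary_edges P) - 4"
proof -
  have fin: "finite P" using assms(1) by (simp add: grid_polygon_def)
  have p: "is_path P \<pi>" using assms(2) by (simp add: shortest_path_def)
  let ?exits = "\<lambda>v. card (ray_exit P v ` set \<pi>)"
  have across_steps_neg: "across_steps (-1, 0) \<pi> = across_steps (1, 0) \<pi>"
    "across_steps (0, -1) \<pi> = across_steps (0, 1) \<pi>"
    by (auto simp: across_steps_def across_def)
  have less: "card (across_steps v \<pi>) < ?exits v" if "v \<in> unit_dirs" for v
    using card_across_steps_less_card_exits[OF fin that assms(2)] .
  have "2 * card (across_steps (1, 0) \<pi>) + 2 * card (across_steps (0, 1) \<pi>) + 4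
      \<le> ?exits (1, 0) + ?exits (-1, 0) + ?exits (0, 1) + ?exits (0, -1)"
    using less[of "(1, 0)"] less[of "(-1, 0)"] less[of "(0, 1)"] less[of "(0, -1)"]
    by (simp add: unit_dirs_def across_steps_neg)
  also have "\<dots> = (\<Sum>v\<in>unit_dirs. ?exits v)"
    by (simp add: unit_dirs_def)
  also have "\<dots> \<le> boundary_edges P"
    using sum_card_exits_le_boundary_edges[OF fin is_path_subset[OF p]] .
  finally show ?thesis
    using path_len_le_card_across_steps[OF p] by linarith
qed

end
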